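(* Let $\mathbb{K}$ be an algebraically closed field of characteristic $p$, with $p=0$ or $p>n$. If $(\Gamma_1,\Gamma_2,\Gamma_3)$ and $(\Sigma_1,\Sigma_2,\Sigma_3)$ are triangular dual $3$-nets of order $n$ in $PG(2,\mathbb{K})$ with $\Gamma_1=\Sigma_1$, then their associated triangles share the two vertices lying on their common side (the line containing $\Gamma_1=\Sigma_1$).
   Context: A dual $3$-net of order $n$ in $PG(2,\mathbb{K})$ is a triple of pairwise disjoint point sets, each of size $n$, such that every line meeting two distinct components meets each component in exactly one point. A dual $3$-net of order $n\ge4$ is triangular if its three components lie respectively on the three sides of a triangle; this (uniquely determined) triangle is called its associated triangle. *)

theory Defs
  imports "HOL-Computational_Algebra.Polynomial"
begin

type_synonym 'a vec3 = "'a \<times> 'a \<times> 'a"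

definition zero3 :: "'a::field vec3" where
  "zero3 = (0, 0, 0)"

definition smult3 :: "'a::field \<Rightarrow> 'a vec3 \<Rightarrow> 'a vec3" where
  "smult3 c v = (case v of (x, y, z) \<Rightarrow> (c * x, c * y, c * z))"

definition dot3 :: "'a::field vec3 \<Rightarrow> 'a vec3 \<Rightarrow> 'a" where
  "dot3 u v = (case u of (a, b, c) \<Rightarrow> case v of (x, y, z) \<Rightarrow> a * x + b * y + c * z)"

definition ppoint :: "'a::field vec3 \<Rightarrow> 'a vec3 set" where
  "ppoint v = {smult3 c v | c. c \<noteq> 0}"

definition PG2_points :: "'a::field vec3 set set" where
  "PG2_points = {ppoint v | v. v \<noteq> zero3}"

definition pline :: "'a::field vec3 \<Rightarrow> 'a vec3 set set" where
  "pline w = {ppoint v | v. v \<noteq> zero3 \<and> dot3 w v = 0}"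

definition PG2_lines :: "'a::field vec3 set set set" where
  "PG2_lines = {pline w | w. w \<noteq> zero3}"

definition dual_3net ::
  "'a::field vec3 set set \<Rightarrow> 'a vec3 set set \<Rightarrow> 'a vec3 set set \<Rightarrow> nat \<Rightarrow> bool" where
  "dual_3net G1 G2 G3 n \<longleftrightarrow>
     (let G = (\<lambda>i::nat. if i = 1 then G1 else if i = 2 then G2 else G3) in
       (\<forall>i\<in>{1,2,3}. G i \<subseteq> PG2_points \<and> finite (G i) \<and> card (G i) = n) \<and>
       (\<forall>i\<in>{1,2,3}. \<forall>j\<in>{1,2,3}. i \<noteq> j \<longrightarrow> G i \<inter> G j = {}) \<and>
       (\<forall>l\<in>PG2_lines. \<forall>i\<in>{1,2,3}. \<forall>j\<in>{1,2,3}.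
           i \<noteq> j \<and> l \<inter> G i \<noteq> {} \<and> l \<inter> G j \<noteq> {} \<longrightarrow>
           (\<forall>k\<in>{1,2,3}. card (l \<inter> G k) = 1)))"

definition triangle ::
  "'a::field vec3 set set \<Rightarrow> 'a vec3 set set \<Rightarrow> 'a vec3 set set \<Rightarrow> bool" where
  "triangle l1 l2 l3 \<longleftrightarrow> l1 \<in> PG2_lines \<and> l2 \<in> PG2_lines \<and> l3 \<in> PG2_lines \<and>
     l1 \<noteq> l2 \<and> l1 \<noteq> l3 \<and> l2 \<noteq> l3 \<and> l1 \<inter> l2 \<inter> l3 = {}"

definition triangle_of ::
  "'a::field vec3 set set \<Rightarrow> 'a vec3 set set \<Rightarrow> 'a vec3 set set \<Rightarrow>
   'a vec3 set set \<Rightarrow> 'a vec3 set set \<Rightarrow> 'a vec3 set set \<Rightarrow> bool" where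
  "triangle_of G1 G2 G3 l1 l2 l3 \<longleftrightarrow>
     triangle l1 l2 l3 \<and> G1 \<subseteq> l1 \<and> G2 \<subseteq> l2 \<and> G3 \<subseteq> l3"

definition triangular_dual_3net ::
  "'a::field vec3 set set \<Rightarrow> 'a vec3 set set \<Rightarrow> 'a vec3 set set \<Rightarrow> nat \<Rightarrow> bool" where
  "triangular_dual_3net G1 G2 G3 n \<longleftrightarrow>
     dual_3net G1 G2 G3 n \<and> n \<ge> 4 \<and> (\<exists>l1 l2 l3. triangle_of G1 G2 G3 l1 l2 l3)"

definition vertex :: "'a::field vec3 set set \<Rightarrow> 'a vec3 set set \<Rightarrow> 'a vec3 set" where
  "vertex l m = (THE P. P \<in> l \<inter> m)"

end

theory Submission
  imports Defs
begin

text \<open>Let a, b span the common side, with ppoint a and ppoint b the vertices of the first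
  triangle on it. In coordinates adapted to a triangle, a component of a triangular dual 3-net
  on the side ab is {ppoint (a + t b) | t \<in> T}, and with e the third vertex, collinearity of
  the points a + t b, e + s a, b + r e of the three components reads t s r = -1; this forces t^n
  to be a constant c on T. The second triangle describes the same component as
  {ppoint (a' + u b') | u \<in> T'} with a' = \<alpha> a + \<beta> b and b' = \<gamma> a + \<delta> b, so
  (\<beta> + \<delta> X)^n - c (\<alpha> + \<gamma> X)^n vanishes at the n roots of X^n - c'. Its
  coefficients at X^(n-1) and X^(n-2) must vanish, and since the binomial coefficients involved
  are nonzero when the characteristic is 0 or exceeds n, the change of basis is diagonal or
  antidiagonal: {a', b'} spans the same two points.\<close>

section \<open>Roots of unity and binary forms\<close>

lemma pow_card_eq_1_if_mult_closed:
  fixes L :: "'a::field set"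
  assumes fin: "finite L" and nz: "0 \<notin> L" and closed: "\<forall>x\<in>L. \<forall>y\<in>L. x * y \<in> L"
    and l: "l \<in> L"
  shows "l ^ card L = 1"
proof -
  have inj: "inj_on ((*) l) L" by (rule inj_onI) (use l nz in auto)
  have "(*) l ` L = L"
    using closed l by (intro card_subset_eq[OF fin]) (auto simp: card_image[OF inj])
  then have "\<Prod>L = prod ((*) l) L" using prod.reindex[OF inj, of id] by simp
  also have "\<dots> = l ^ card L * \<Prod>L" by (simp add: prod.distrib)
  finally show ?thesis using fin nz by simp
qed

lemma pow_card_const_if_mult_stable:
  fixes T L :: "'a::field set"
  assumes fin: "finite T" "finite L" and card: "card L = card T" and nz: "0 \<notin> T"
    and stable: "\<forall>t\<in>T. \<forall>l\<in>L. t * l \<in> T" and t0: "t0 \<in> T" and t: "t \<in> T"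
  shows "t ^ card T = t0 ^ card T"
proof -
  have t0_nz: "t0 \<noteq> 0" using t0 nz by blast
  have inj: "inj_on (\<lambda>l. l * t0) L" by (rule inj_onI) (use t0_nz in auto)
  have coset: "(\<lambda>l. l * t0) ` L = T"
    using stable t0 card fin by (intro card_subset_eq) (auto simp: card_image[OF inj] mult.commute)
  have "0 \<notin> L" using stable t0 nz by force
  moreover have "\<forall>x\<in>L. \<forall>y\<in>L. x * y \<in> L"
  proof (intro ballI)
    fix x y assume "x \<in> L" "y \<in> L"
    then have "(y * t0) * x \<in> T" using stable coset by blast
    then obtain z where "z \<in> L" "(y * t0) * x = z * t0" using coset by (metis imageE)
    then show "x * y \<in> L" using t0_nz by (simp add: field_simps)
  qed
  moreover obtain l where "l \<in> L" "t = l * t0" using coset t by blast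
  ultimately show ?thesis
    using pow_card_eq_1_if_mult_closed[OF fin(2)] card by (simp add: power_mult_distrib)
qed

text \<open>For s0 \<in> S the set S/s0 stabilizes T, which is therefore a coset of the group of n-th
  roots of unity.\<close>

lemma pow_const_if_product_relation:
  fixes T S R :: "'a::field set"
  assumes fin: "finite T" "finite S" "finite R"
    and card: "card T = n" "card S = n" "card R = n" and "n \<ge> 1"
    and nz: "0 \<notin> T" "0 \<notin> S"
    and rel: "\<forall>t\<in>T. \<forall>s\<in>S. \<exists>r\<in>R. t * s * r = -1"
  shows "\<exists>c. c \<noteq> 0 \<and> (\<forall>t\<in>T. t ^ n = c)"
proof -
  obtain s0 t0 where s0: "s0 \<in> S" and t0: "t0 \<in> T"
    using card \<open>n \<ge> 1\<close> by (metis card.empty ex_in_conv not_one_le_zero)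
  have s0_nz: "s0 \<noteq> 0" using s0 nz by blast
  define f where "f t = -1 / (t * s0)" for t
  have inj: "inj_on f T" by (rule inj_onI) (use nz s0_nz in \<open>auto simp: f_def field_simps\<close>)
  have "f ` T \<subseteq> R"
  proof
    fix x assume "x \<in> f ` T"
    then obtain t where t: "t \<in> T" "x = f t" by blast
    obtain r where "r \<in> R" "t * s0 * r = -1" using rel t s0 by blast
    moreover have "t \<noteq> 0" using t nz by blast
    ultimately have "r = f t" using s0_nz by (auto simp: f_def field_simps)
    then show "x \<in> R" using t \<open>r \<in> R\<close> by simp
  qed
  then have fT: "f ` T = R" using card fin by (intro card_subset_eq) (auto simp: card_image[OF inj])
  have stable: "\<forall>t\<in>T. \<forall>l\<in>(\<lambda>s. s / s0) ` S. t * l \<in> T"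
  proof (intro ballI)
    fix t l assume t: "t \<in> T" and "l \<in> (\<lambda>s. s / s0) ` S"
    then obtain s where s: "s \<in> S" "l = s / s0" by blast
    obtain r where "r \<in> R" "t * s * r = -1" using rel t s by blast
    then obtain t' where t': "t' \<in> T" "t * s * f t' = -1" using fT by blast
    moreover have "t' \<noteq> 0" using t' nz by blast
    ultimately have "t' = t * l" using s s0_nz by (auto simp: f_def field_simps)
    then show "t * l \<in> T" using t' by simp
  qed
  have "card ((\<lambda>s. s / s0) ` S) = n"
    using card s0_nz by (subst card_image) (auto intro: inj_onI)
  then have "\<forall>t\<in>T. t ^ n = t0 ^ n"
    using pow_card_const_if_mult_stable[OF fin(1) _ _ nz(1) stable t0] fin card by simp
  moreover have "t0 ^ n \<noteq> 0" using t0 nz by auto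
  ultimately show ?thesis by blast
qed

lemma coeff_eq_0_if_vanishes_on_pow_roots:
  fixes p :: "'a::idom poly"
  assumes deg: "degree p \<le> n" and fin: "finite T" and card: "card T = n"
    and roots: "\<forall>t\<in>T. t ^ n = c" and vanish: "\<forall>t\<in>T. poly p t = 0"
    and j: "0 < j" "j < n"
  shows "coeff p j = 0"
proof -
  define q :: "'a poly" where "q = monom 1 n - [:c:]"
  define r where "r = p - smult (coeff p n) q"
  have "degree q \<le> n" unfolding q_def by (rule degree_diff_le) (auto simp: degree_monom_le)
  then have "degree r \<le> n" unfolding r_def using deg
    by (meson degree_diff_le degree_smult_le order.trans)
  moreover have "coeff r n = 0" using j by (cases n) (simp_all add: r_def q_def)
  ultimately have deg_r: "degree r < n" if "r \<noteq> 0"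
    using that j by (metis le_neq_implies_less leading_coeff_0_iff)
  have "T \<subseteq> {x. poly r x = 0}" using roots vanish by (auto simp: r_def q_def poly_monom)
  have "r = 0"
  proof (rule ccontr)
    assume "r \<noteq> 0"
    then have "card T \<le> card {x. poly r x = 0}"
      using \<open>T \<subseteq> _\<close> poly_roots_finite by (metis card_mono)
    also have "\<dots> \<le> degree r" using card_poly_roots_bound[OF \<open>r \<noteq> 0\<close>] .
    finally show False using deg_r[OF \<open>r \<noteq> 0\<close>] card by simp
  qed
  then have "p = smult (coeff p n) q" by (simp add: r_def)
  then have "coeff p j = coeff p n * coeff q j" by (metis coeff_smult)
  then show ?thesis using j by (cases j) (simp_all add: q_def coeff_monom)
qed

lemma linear_forms_cases_if_pow_proportional:
  fixes \<alpha> \<beta> \<gamma> \<delta> c :: "'a::field"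
  assumes E1: "\<delta> ^ Suc m * \<beta> = c * \<gamma> ^ Suc m * \<alpha>"
    and E2: "\<delta> ^ m * \<beta>\<^sup>2 = c * \<gamma> ^ m * \<alpha>\<^sup>2"
    and "c \<noteq> 0" and det: "\<alpha> * \<delta> - \<beta> * \<gamma> \<noteq> 0"
  shows "(\<beta> = 0 \<and> \<gamma> = 0) \<or> (\<alpha> = 0 \<and> \<delta> = 0)"
proof -
  have "c * \<alpha> * \<gamma> ^ m * (\<beta> * \<gamma> - \<alpha> * \<delta>) = \<beta> * (\<delta> ^ Suc m * \<beta>) - \<delta> * (\<delta> ^ m * \<beta>\<^sup>2)"
    unfolding E1 E2 by (simp add: power2_eq_square algebra_simps)
  also have "\<dots> = 0" by (simp add: power2_eq_square algebra_simps)
  finally have "\<alpha> = 0 \<or> \<gamma> = 0" using \<open>c \<noteq> 0\<close> det by (auto simp: algebra_simps)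
  then show ?thesis using E1 det by auto
qed

lemma linear_forms_cases_if_pow_proportional_on_roots:
  fixes \<alpha> \<beta> \<gamma> \<delta> c c' :: "'a::field"
  assumes fin: "finite T" and card: "card T = n" and "n \<ge> 3"
    and char: "\<And>m. 1 \<le> m \<Longrightarrow> m \<le> n \<Longrightarrow> of_nat m \<noteq> (0::'a)"
    and roots: "\<forall>t\<in>T. t ^ n = c'"
    and proportional: "\<forall>t\<in>T. (\<beta> + t * \<delta>) ^ n = c * (\<alpha> + t * \<gamma>) ^ n"
    and "c \<noteq> 0" and det: "\<alpha> * \<delta> - \<beta> * \<gamma> \<noteq> 0"
  shows "(\<beta> = 0 \<and> \<gamma> = 0) \<or> (\<alpha> = 0 \<and> \<delta> = 0)"
proof -
  define p where "p = [:\<beta>, \<delta>:] ^ n - smult c ([:\<alpha>, \<gamma>:] ^ n)"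
  have "degree p \<le> n" unfolding p_def
    by (rule degree_diff_le) (auto intro: order.trans[OF degree_power_le] order.trans[OF degree_smult_le])
  moreover have "\<forall>t\<in>T. poly p t = 0" using proportional by (simp add: p_def algebra_simps)
  ultimately have coeff_0: "coeff p j = 0" if "0 < j" "j < n" for j
    using coeff_eq_0_if_vanishes_on_pow_roots[OF _ fin card roots] that by blast
  have coeff_p: "coeff p j = of_nat (n choose j) * (\<delta> ^ j * \<beta> ^ (n - j) - c * \<gamma> ^ j * \<alpha> ^ (n - j))"
    if "j \<le> n" for j
    using that by (simp add: p_def coeff_linear_poly_power right_diff_distrib mult_ac)
  obtain m where n: "n = Suc (Suc m)" using \<open>n \<ge> 3\<close> by (intro that[of "n - 2"]) simp
  have E1: "\<delta> ^ Suc m * \<beta> = c * \<gamma> ^ Suc m * \<alpha>"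
    using coeff_0[of "Suc m"] coeff_p[of "Suc m"] char[of n] by (simp add: n)
  have "n choose m = n choose 2" using binomial_symmetric[of 2 n] by (simp add: n)
  moreover have "2 * (n choose 2) = n * Suc m" by (metis Suc_1 Suc_times_binomial choose_one n)
  ultimately have "of_nat 2 * of_nat (n choose m) = (of_nat n * of_nat (Suc m) :: 'a)"
    by (metis of_nat_mult)
  then have "of_nat (n choose m) \<noteq> (0::'a)" using char[of n] char[of "Suc m"] by (auto simp: n)
  then have E2: "\<delta> ^ m * \<beta>\<^sup>2 = c * \<gamma> ^ m * \<alpha>\<^sup>2"
    using coeff_0[of m] coeff_p[of m] \<open>n \<ge> 3\<close> by (simp add: n)
  show ?thesis by (rule linear_forms_cases_if_pow_proportional[OF E1 E2 \<open>c \<noteq> 0\<close> det])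
qed

lemma of_nat_neq_0_if_CHAR:
  assumes "CHAR('a::semiring_1) = 0 \<or> CHAR('a) > n" "1 \<le> m" "m \<le> n"
  shows "of_nat m \<noteq> (0::'a)"
  using assms by (auto simp: of_nat_eq_0_iff_char_dvd dest: dvd_imp_le)

section \<open>Vectors of K^3\<close>

definition lincomb3 :: "'a::field \<Rightarrow> 'a vec3 \<Rightarrow> 'a \<Rightarrow> 'a vec3 \<Rightarrow> 'a vec3" where
  "lincomb3 x u y v = (case u of (u1, u2, u3) \<Rightarrow> case v of (v1, v2, v3) \<Rightarrow>
     (x * u1 + y * v1, x * u2 + y * v2, x * u3 + y * v3))"

definition cross3 :: "'a::field vec3 \<Rightarrow> 'a vec3 \<Rightarrow> 'a vec3" where
  "cross3 u v = (case u of (u1, u2, u3) \<Rightarrow> case v of (v1, v2, v3) \<Rightarrow>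
     (u2 * v3 - u3 * v2, u3 * v1 - u1 * v3, u1 * v2 - u2 * v1))"

definition independent2 :: "'a::field vec3 \<Rightarrow> 'a vec3 \<Rightarrow> bool" where
  "independent2 u v \<longleftrightarrow> (\<forall>x y. lincomb3 x u y v = zero3 \<longrightarrow> x = 0 \<and> y = 0)"

lemmas vec3_defs = lincomb3_def cross3_def dot3_def smult3_def zero3_def

lemma dot3_lincomb3: "dot3 w (lincomb3 x u y v) = x * dot3 w u + y * dot3 w v"
  by (cases w rule: prod_cases3, cases u rule: prod_cases3, cases v rule: prod_cases3)
     (simp add: vec3_defs algebra_simps)

lemma dot3_smult3: "dot3 w (smult3 k v) = k * dot3 w v"
  by (cases w rule: prod_cases3, cases v rule: prod_cases3) (simp add: vec3_defs algebra_simps)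

lemma dot3_commute: "dot3 u v = dot3 v u"
  by (cases u rule: prod_cases3, cases v rule: prod_cases3) (simp add: vec3_defs algebra_simps)

lemma dot3_zero3: "dot3 w zero3 = 0"
  by (cases w rule: prod_cases3) (simp add: vec3_defs)

lemma lincomb3_commute: "lincomb3 x u y v = lincomb3 y v x u"
  by (cases u rule: prod_cases3, cases v rule: prod_cases3) (simp add: vec3_defs add.commute)

lemma lincomb3_lincomb3:
  "lincomb3 x (lincomb3 a u b v) y (lincomb3 c u d v) = lincomb3 (x * a + y * c) u (x * b + y * d) v"
  by (cases u rule: prod_cases3, cases v rule: prod_cases3) (simp add: vec3_defs algebra_simps)

lemma smult3_lincomb3: "smult3 k (lincomb3 x u y v) = lincomb3 (k * x) u (k * y) v"
  by (cases u rule: prod_cases3, cases v rule: prod_cases3) (simp add: vec3_defs algebra_simps)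

lemma lincomb3_0_0: "lincomb3 0 u 0 v = zero3"
  and lincomb3_right_0: "lincomb3 x u 0 v = smult3 x u"
  and lincomb3_left_0: "lincomb3 0 u y v = smult3 y v"
  by (cases u rule: prod_cases3, cases v rule: prod_cases3; simp add: vec3_defs)+

lemma smult3_1: "smult3 1 v = v"
  and smult3_smult3: "smult3 a (smult3 b v) = smult3 (a * b) v"
  and smult3_eq_zero3_iff: "smult3 k v = zero3 \<longleftrightarrow> k = 0 \<or> v = zero3"
  by (cases v rule: prod_cases3; auto simp: vec3_defs)+

lemma dot3_cross3_self: "dot3 u (cross3 u v) = 0" "dot3 v (cross3 u v) = 0"
  by (cases u rule: prod_cases3, cases v rule: prod_cases3; simp add: vec3_defs algebra_simps)+

lemma det3_rotate: "dot3 w2 (cross3 w3 w1) = dot3 w1 (cross3 w2 w3)"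
  by (cases w1 rule: prod_cases3, cases w2 rule: prod_cases3, cases w3 rule: prod_cases3)
     (simp add: vec3_defs algebra_simps)

lemma cross3_cross3: "cross3 (cross3 u v) w = lincomb3 (dot3 w u) v (- dot3 w v) u"
  by (cases u rule: prod_cases3, cases v rule: prod_cases3, cases w rule: prod_cases3)
     (simp add: vec3_defs algebra_simps)

text \<open>Cramer's rule: the cross products w2 \<times> w3, w3 \<times> w1, w1 \<times> w2 form the basis dual to
  w1, w2, w3, scaled by their determinant.\<close>

lemma smult3_det3_eq:
  "smult3 (dot3 w1 (cross3 w2 w3)) v =
     lincomb3 (dot3 w1 v) (cross3 w2 w3) 1 (lincomb3 (dot3 w2 v) (cross3 w3 w1) (dot3 w3 v) (cross3 w1 w2))"
  by (cases w1 rule: prod_cases3, cases w2 rule: prod_cases3, cases w3 rule: prod_cases3,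
      cases v rule: prod_cases3) (simp add: vec3_defs algebra_simps)

lemma det3_side_points:
  fixes w1 w2 w3 :: "'a::field vec3"
  defines "a \<equiv> cross3 w1 w2" and "b \<equiv> cross3 w3 w1" and "c \<equiv> cross3 w2 w3"
  shows "dot3 (cross3 (lincomb3 1 a t b) (lincomb3 1 c s a)) (lincomb3 1 b r c)
           = (1 + t * s * r) * (dot3 w1 (cross3 w2 w3))\<^sup>2"
  unfolding assms
  by (cases w1 rule: prod_cases3, cases w2 rule: prod_cases3, cases w3 rule: prod_cases3)
     (simp add: vec3_defs algebra_simps power2_eq_square)

lemma parallel_if_cross3_eq_zero3:
  assumes "u \<noteq> zero3" "cross3 u v = zero3"
  obtains k where "v = smult3 k u"
proof -
  obtain u1 u2 u3 where u: "u = (u1, u2, u3)" by (cases u rule: prod_cases3)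
  obtain v1 v2 v3 where v: "v = (v1, v2, v3)" by (cases v rule: prod_cases3)
  have e: "u2 * v3 = u3 * v2" "u3 * v1 = u1 * v3" "u1 * v2 = u2 * v1"
    using assms(2) by (auto simp: u v vec3_defs)
  consider "u1 \<noteq> 0" | "u1 = 0" "u2 \<noteq> 0" | "u1 = 0" "u2 = 0" "u3 \<noteq> 0"
    using assms(1) by (auto simp: u vec3_defs)
  then show thesis
  proof cases
    case 1 then show ?thesis using e by (intro that[of "v1 / u1"]) (auto simp: u v vec3_defs field_simps)
  next
    case 2 then show ?thesis using e by (intro that[of "v2 / u2"]) (auto simp: u v vec3_defs field_simps)
  next
    case 3 then show ?thesis using e by (intro that[of "v3 / u3"]) (auto simp: u v vec3_defs field_simps)
  qed
qed

lemma parallel_cross3_if_orthogonal: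
  assumes "cross3 u v \<noteq> zero3" "dot3 w u = 0" "dot3 w v = 0"
  obtains k where "w = smult3 k (cross3 u v)"
  using parallel_if_cross3_eq_zero3[OF assms(1)] assms(2,3)
  by (metis cross3_cross3 lincomb3_0_0 neg_0_equal_iff_equal)

lemma independent2_lincomb3_eq_iff:
  assumes "independent2 a b"
  shows "lincomb3 x a y b = lincomb3 x' a y' b \<longleftrightarrow> x = x' \<and> y = y'"
proof
  assume "lincomb3 x a y b = lincomb3 x' a y' b"
  then have "lincomb3 (x - x') a (y - y') b = zero3"
    by (cases a rule: prod_cases3, cases b rule: prod_cases3) (auto simp: vec3_defs algebra_simps)
  then have "x - x' = 0 \<and> y - y' = 0" using assms unfolding independent2_def by blast
  then show "x = x' \<and> y = y'" by simp
qed simp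

lemma independent2_nonzero:
  assumes "independent2 a b"
  shows "a \<noteq> zero3" "b \<noteq> zero3" "lincomb3 1 a t b \<noteq> zero3"
proof -
  have "lincomb3 1 a 0 b = a" "lincomb3 0 a 1 b = b"
    by (simp_all add: lincomb3_right_0 lincomb3_left_0 smult3_1)
  then show "a \<noteq> zero3" "b \<noteq> zero3" "lincomb3 1 a t b \<noteq> zero3"
    using assms unfolding independent2_def by (metis one_neq_zero)+
qed

lemma independent2_lincomb3_det:
  assumes "independent2 (lincomb3 \<alpha> a \<beta> b) (lincomb3 \<gamma> a \<delta> b)"
  shows "\<alpha> * \<delta> - \<beta> * \<gamma> \<noteq> 0"
proof
  assume det: "\<alpha> * \<delta> - \<beta> * \<gamma> = 0"
  have "lincomb3 \<delta> (lincomb3 \<alpha> a \<beta> b) (- \<beta>) (lincomb3 \<gamma> a \<delta> b) = zero3"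
    "lincomb3 \<gamma> (lincomb3 \<alpha> a \<beta> b) (- \<alpha>) (lincomb3 \<gamma> a \<delta> b) = zero3"
    using det by (simp_all add: lincomb3_lincomb3 lincomb3_0_0 algebra_simps)
  then have "- \<alpha> = 0 \<and> - \<beta> = 0" using assms unfolding independent2_def by blast
  then show False using independent2_nonzero(1)[OF assms] by (simp add: lincomb3_0_0)
qed

section \<open>Points and lines of PG(2,K)\<close>

lemma mem_ppoint: "x \<in> ppoint v \<longleftrightarrow> (\<exists>k. k \<noteq> 0 \<and> x = smult3 k v)"
  by (auto simp: ppoint_def)

lemma ppoint_eqD:
  assumes "ppoint u = ppoint v"
  obtains k where "k \<noteq> 0" "u = smult3 k v"
proof -
  have "u \<in> ppoint u" by (metis mem_ppoint smult3_1 one_neq_zero)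
  then have "u \<in> ppoint v" using assms by simp
  then show thesis using that by (auto simp: mem_ppoint)
qed

lemma ppoint_smult3:
  assumes "k \<noteq> 0"
  shows "ppoint (smult3 k v) = ppoint v"
proof (intro set_eqI iffI)
  fix x assume "x \<in> ppoint (smult3 k v)"
  then obtain c where "c \<noteq> 0" "x = smult3 (c * k) v" by (auto simp: mem_ppoint smult3_smult3)
  then show "x \<in> ppoint v" using assms unfolding mem_ppoint by (intro exI[of _ "c * k"]) simp
next
  fix x assume "x \<in> ppoint v"
  then obtain c where "c \<noteq> 0" "x = smult3 c v" by (auto simp: mem_ppoint)
  then show "x \<in> ppoint (smult3 k v)"
    using assms unfolding mem_ppoint by (intro exI[of _ "c / k"]) (simp add: smult3_smult3)
qed

lemma ppoint_eq_if_cross3_eq_zero3: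
  assumes "u \<noteq> zero3" "v \<noteq> zero3" "cross3 u v = zero3"
  shows "ppoint v = ppoint u"
proof -
  obtain k where k: "v = smult3 k u" using parallel_if_cross3_eq_zero3[OF assms(1,3)] .
  then have "k \<noteq> 0" using assms(2) by (auto simp: smult3_eq_zero3_iff)
  then show ?thesis using k by (simp add: ppoint_smult3)
qed

lemma ppoint_lincomb3_inj:
  assumes "independent2 a b" "ppoint (lincomb3 1 a t b) = ppoint (lincomb3 1 a t' b)"
  shows "t = t'"
proof -
  obtain k where "lincomb3 1 a t b = lincomb3 k a (k * t') b"
    using ppoint_eqD[OF assms(2)] by (metis smult3_lincomb3 mult_1_right)
  then show ?thesis using independent2_lincomb3_eq_iff[OF assms(1)] by simp
qed

lemma pline_smult3:
  assumes "k \<noteq> 0"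
  shows "pline (smult3 k w) = pline w"
  using assms by (auto simp: pline_def dot3_commute[of "smult3 k w"] dot3_smult3 dot3_commute[of w])

lemma pline_eq_if_cross3_eq_zero3:
  assumes "w \<noteq> zero3" "w' \<noteq> zero3" "cross3 w w' = zero3"
  shows "pline w' = pline w"
proof -
  obtain k where k: "w' = smult3 k w" using parallel_if_cross3_eq_zero3[OF assms(1,3)] .
  then have "k \<noteq> 0" using assms(2) by (auto simp: smult3_eq_zero3_iff)
  then show ?thesis using k by (simp add: pline_smult3)
qed

lemma ppoint_in_pline_iff:
  assumes "v \<noteq> zero3"
  shows "ppoint v \<in> pline w \<longleftrightarrow> dot3 w v = 0"
proof
  assume "ppoint v \<in> pline w"
  then obtain v' where "ppoint v = ppoint v'" "dot3 w v' = 0" by (auto simp: pline_def)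
  then show "dot3 w v = 0" by (metis ppoint_eqD dot3_smult3 mult_zero_right)
qed (use assms in \<open>unfold pline_def, blast\<close>)

lemma pline_elem:
  assumes "P \<in> pline w"
  obtains v where "v \<noteq> zero3" "P = ppoint v" "dot3 w v = 0"
  using assms by (auto simp: pline_def)

lemma PG2_lines_elem:
  assumes "l \<in> PG2_lines"
  obtains w where "w \<noteq> zero3" "l = pline w"
  using assms by (auto simp: PG2_lines_def)

lemma PG2_lines_eq_if_two_common_points:
  assumes "l \<in> PG2_lines" "l' \<in> PG2_lines" "P \<in> l" "Q \<in> l" "P \<in> l'" "Q \<in> l'" "P \<noteq> Q"
  shows "l = l'"
proof -
  obtain u v where u: "u \<noteq> zero3" "P = ppoint u" and v: "v \<noteq> zero3" "Q = ppoint v"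
    using assms(1,3,4) by (metis PG2_lines_elem pline_elem)
  have cross: "cross3 u v \<noteq> zero3"
    using ppoint_eq_if_cross3_eq_zero3[OF u(1) v(1)] u v assms(7) by auto
  have "l'' = pline (cross3 u v)" if l'': "l'' \<in> PG2_lines" "P \<in> l''" "Q \<in> l''" for l''
  proof -
    obtain w where w: "w \<noteq> zero3" "l'' = pline w" using l''(1) by (rule PG2_lines_elem)
    have "dot3 w u = 0" "dot3 w v = 0"
      using l'' u v w ppoint_in_pline_iff[OF u(1)] ppoint_in_pline_iff[OF v(1)] by simp_all
    then obtain k where k: "w = smult3 k (cross3 u v)" by (rule parallel_cross3_if_orthogonal[OF cross])
    then have "k \<noteq> 0" using w(1) by (auto simp: smult3_eq_zero3_iff)
    then show ?thesis using k w(2) by (simp add: pline_smult3)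
  qed
  then show ?thesis using assms by metis
qed

lemma PG2_lines_eq_if_common_subset:
  assumes "l \<in> PG2_lines" "l' \<in> PG2_lines" "A \<subseteq> l" "A \<subseteq> l'" "finite A" "card A \<ge> 2"
  shows "l = l'"
proof -
  obtain P Q where "P \<in> A" "Q \<in> A" "P \<noteq> Q" using card_le_Suc0_iff_eq[OF assms(5)] assms(6) by auto
  then show ?thesis using assms(1-4) by (intro PG2_lines_eq_if_two_common_points[of l l' P Q]) auto
qed

lemma vertex_commute: "vertex l m = vertex m l"
  by (simp add: vertex_def Int_commute)

lemma vertex_pline:
  assumes "w1 \<noteq> zero3" "w2 \<noteq> zero3" "pline w1 \<noteq> pline w2"
  shows "vertex (pline w1) (pline w2) = ppoint (cross3 w1 w2)"
    and "cross3 w1 w2 \<noteq> zero3"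
proof -
  show cross: "cross3 w1 w2 \<noteq> zero3" using pline_eq_if_cross3_eq_zero3 assms by metis
  have "ppoint (cross3 w1 w2) \<in> pline w1 \<inter> pline w2"
    using cross by (simp add: ppoint_in_pline_iff dot3_cross3_self)
  moreover have "P = ppoint (cross3 w1 w2)" if P: "P \<in> pline w1 \<inter> pline w2" for P
  proof -
    obtain v where v: "v \<noteq> zero3" "P = ppoint v" "dot3 w1 v = 0"
      using pline_elem[of P w1] P by blast
    then have "dot3 v w1 = 0" "dot3 v w2 = 0"
      using P ppoint_in_pline_iff[OF v(1)] by (simp_all add: dot3_commute)
    then obtain k where k: "v = smult3 k (cross3 w1 w2)" by (rule parallel_cross3_if_orthogonal[OF cross])
    then have "k \<noteq> 0" using v(1) by (auto simp: smult3_eq_zero3_iff)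
    then show ?thesis using k v(2) by (simp add: ppoint_smult3)
  qed
  ultimately show "vertex (pline w1) (pline w2) = ppoint (cross3 w1 w2)"
    unfolding vertex_def by (rule the_equality)
qed

section \<open>Coordinates adapted to a triangle\<close>

lemma triangle_coordinates:
  assumes "triangle l1 l2 l3"
  obtains w1 w2 w3 where "l1 = pline w1" "l2 = pline w2" "l3 = pline w3"
    "dot3 w1 (cross3 w2 w3) \<noteq> 0"
    "vertex l1 l2 = ppoint (cross3 w1 w2)" "vertex l1 l3 = ppoint (cross3 w3 w1)"
proof -
  obtain w1 w2 w3 where w: "w1 \<noteq> zero3" "l1 = pline w1" "w2 \<noteq> zero3" "l2 = pline w2"
    "w3 \<noteq> zero3" "l3 = pline w3"
    using assms unfolding triangle_def by (metis PG2_lines_elem)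
  have distinct: "l1 \<noteq> l2" "l1 \<noteq> l3" and no_common: "l1 \<inter> l2 \<inter> l3 = {}"
    using assms by (auto simp: triangle_def)
  have "vertex l1 l2 = ppoint (cross3 w1 w2)" "cross3 w1 w2 \<noteq> zero3"
    using vertex_pline[of w1 w2] w distinct by auto
  moreover have "vertex l1 l3 = ppoint (cross3 w3 w1)"
    using vertex_pline[of w3 w1] w distinct by (auto simp: vertex_commute)
  moreover have "dot3 w1 (cross3 w2 w3) \<noteq> 0"
  proof
    assume "dot3 w1 (cross3 w2 w3) = 0"
    then have "dot3 w3 (cross3 w1 w2) = 0" by (metis det3_rotate)
    then have "ppoint (cross3 w1 w2) \<in> l1 \<inter> l2 \<inter> l3"
      using \<open>cross3 w1 w2 \<noteq> zero3\<close> w by (simp add: ppoint_in_pline_iff dot3_cross3_self)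
    then show False using no_common by blast
  qed
  ultimately show thesis using that w by blast
qed

lemma side_spanned_by_vertices:
  assumes D: "dot3 w1 (cross3 w2 w3) \<noteq> 0" and "dot3 w1 v = 0"
  shows "v = lincomb3 (dot3 w3 v / dot3 w1 (cross3 w2 w3)) (cross3 w1 w2)
                      (dot3 w2 v / dot3 w1 (cross3 w2 w3)) (cross3 w3 w1)"
proof -
  have "v = smult3 (1 / dot3 w1 (cross3 w2 w3)) (smult3 (dot3 w1 (cross3 w2 w3)) v)"
    using D by (simp add: smult3_smult3 smult3_1)
  also have "smult3 (dot3 w1 (cross3 w2 w3)) v = lincomb3 (dot3 w3 v) (cross3 w1 w2) (dot3 w2 v) (cross3 w3 w1)"
    using assms(2) smult3_det3_eq[of w1 w2 w3 v] lincomb3_commute[of "dot3 w2 v" "cross3 w3 w1"]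
    by (simp add: lincomb3_left_0 smult3_1)
  finally show ?thesis by (simp add: smult3_lincomb3)
qed

lemma side_point_coordinate:
  assumes D: "dot3 w1 (cross3 w2 w3) \<noteq> 0" and "dot3 w1 v = 0" and w3v: "dot3 w3 v \<noteq> 0"
  shows "ppoint v = ppoint (lincomb3 1 (cross3 w1 w2) (dot3 w2 v / dot3 w3 v) (cross3 w3 w1))"
proof -
  define k where "k = dot3 w3 v / dot3 w1 (cross3 w2 w3)"
  have "v = smult3 k (lincomb3 1 (cross3 w1 w2) (dot3 w2 v / dot3 w3 v) (cross3 w3 w1))"
    using side_spanned_by_vertices[OF assms(1,2)] D w3v by (simp add: k_def smult3_lincomb3)
  moreover have "k \<noteq> 0" using D w3v by (simp add: k_def)
  ultimately show ?thesis by (metis ppoint_smult3)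
qed

lemma independent2_side_vertices:
  assumes D: "dot3 w1 (cross3 w2 w3) \<noteq> 0"
  shows "independent2 (cross3 w1 w2) (cross3 w3 w1)"
  unfolding independent2_def
proof (intro allI impI)
  fix x y assume "lincomb3 x (cross3 w1 w2) y (cross3 w3 w1) = zero3"
  then have "dot3 w3 (lincomb3 x (cross3 w1 w2) y (cross3 w3 w1)) = 0"
    "dot3 w2 (lincomb3 x (cross3 w1 w2) y (cross3 w3 w1)) = 0"
    by (simp_all add: dot3_zero3)
  then show "x = 0 \<and> y = 0"
    using D by (simp add: dot3_lincomb3 dot3_cross3_self det3_rotate[of w3] det3_rotate[of w2])
qed

definition line_basis :: "'a::field vec3 set set \<Rightarrow> 'a vec3 \<Rightarrow> 'a vec3 \<Rightarrow> bool" where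
  "line_basis l a b \<longleftrightarrow> independent2 a b \<and> ppoint a \<in> l \<and> ppoint b \<in> l \<and>
     (\<forall>v. v \<noteq> zero3 \<longrightarrow> ppoint v \<in> l \<longrightarrow> (\<exists>x y. v = lincomb3 x a y b))"

lemma line_basis_side_vertices:
  assumes D: "dot3 w1 (cross3 w2 w3) \<noteq> 0"
  shows "line_basis (pline w1) (cross3 w1 w2) (cross3 w3 w1)"
proof -
  have indep: "independent2 (cross3 w1 w2) (cross3 w3 w1)" by (rule independent2_side_vertices[OF D])
  moreover have "ppoint (cross3 w1 w2) \<in> pline w1" "ppoint (cross3 w3 w1) \<in> pline w1"
    using independent2_nonzero(1,2)[OF indep] by (simp_all add: ppoint_in_pline_iff dot3_cross3_self)
  moreover have "\<exists>x y. v = lincomb3 x (cross3 w1 w2) y (cross3 w3 w1)"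
    if "v \<noteq> zero3" "ppoint v \<in> pline w1" for v
    using side_spanned_by_vertices[OF D] ppoint_in_pline_iff[OF that(1)] that(2) by blast
  ultimately show ?thesis unfolding line_basis_def by blast
qed

lemma side_component_coordinates:
  fixes G :: "'a::field vec3 set set"
  assumes D: "dot3 w1 (cross3 w2 w3) \<noteq> 0" and side: "G \<subseteq> pline w1"
    and avoid: "pline w2 \<inter> G = {}" "pline w3 \<inter> G = {}"
  obtains T where "G = (\<lambda>t. ppoint (lincomb3 1 (cross3 w1 w2) t (cross3 w3 w1))) ` T"
    "card T = card G" "0 \<notin> T"
proof -
  define P where "P t = ppoint (lincomb3 1 (cross3 w1 w2) t (cross3 w3 w1))" for t
  define T where "T = {t. P t \<in> G}"
  have indep: "independent2 (cross3 w1 w2) (cross3 w3 w1)" by (rule independent2_side_vertices[OF D])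
  have "G \<subseteq> P ` T"
  proof
    fix g assume g: "g \<in> G"
    then obtain v where v: "v \<noteq> zero3" "g = ppoint v" "dot3 w1 v = 0" using side pline_elem by blast
    then have "dot3 w3 v \<noteq> 0" using g avoid(2) ppoint_in_pline_iff by blast
    then have "g = P (dot3 w2 v / dot3 w3 v)" using side_point_coordinate[OF D v(3)] v by (simp add: P_def)
    then show "g \<in> P ` T" using g by (auto simp: T_def)
  qed
  then have image: "G = P ` T" by (auto simp: T_def)
  have "inj_on P T" by (rule inj_onI) (use ppoint_lincomb3_inj[OF indep] in \<open>simp add: P_def\<close>)
  then have "card T = card G" using image card_image by metis
  moreover have "0 \<notin> T"
  proof
    assume "0 \<in> T"
    moreover have "P 0 = ppoint (cross3 w1 w2)" by (simp add: P_def lincomb3_right_0 smult3_1)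
    moreover have "ppoint (cross3 w1 w2) \<in> pline w2"
      using independent2_nonzero(1)[OF indep] by (simp add: ppoint_in_pline_iff dot3_cross3_self)
    ultimately show False using avoid(1) by (auto simp: T_def)
  qed
  ultimately show thesis using that image unfolding P_def by blast
qed

section \<open>Triangular dual 3-nets\<close>

lemma dual_3net_iff:
  "dual_3net G1 G2 G3 n \<longleftrightarrow>
     (\<forall>G\<in>{G1, G2, G3}. G \<subseteq> PG2_points \<and> finite G \<and> card G = n) \<and>
     G1 \<inter> G2 = {} \<and> G2 \<inter> G3 = {} \<and> G3 \<inter> G1 = {} \<and>
     (\<forall>l\<in>PG2_lines.
        (l \<inter> G1 \<noteq> {} \<and> l \<inter> G2 \<noteq> {}) \<or> (l \<inter> G2 \<noteq> {} \<and> l \<inter> G3 \<noteq> {}) \<or>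
        (l \<inter> G3 \<noteq> {} \<and> l \<inter> G1 \<noteq> {}) \<longrightarrow>
        card (l \<inter> G1) = 1 \<and> card (l \<inter> G2) = 1 \<and> card (l \<inter> G3) = 1)"
  unfolding dual_3net_def Let_def by (simp add: Int_commute ball_conj_distrib conj_comms)

lemma dual_3net_rotate:
  assumes "dual_3net G1 G2 G3 n"
  shows "dual_3net G2 G3 G1 n"
  using assms unfolding dual_3net_iff by (simp add: insert_commute disj_comms conj_comms Int_commute)

lemma dual_3netD:
  assumes "dual_3net G1 G2 G3 n"
  shows "finite G1" "card G1 = n" "G1 \<inter> G2 = {}"
    and "\<And>l. l \<in> PG2_lines \<Longrightarrow> l \<inter> G1 \<noteq> {} \<Longrightarrow> l \<inter> G2 \<noteq> {} \<Longrightarrow>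
           card (l \<inter> G1) = 1 \<and> card (l \<inter> G2) = 1 \<and> card (l \<inter> G3) = 1"
  using assms unfolding dual_3net_iff by auto

lemma dual_3net_side_avoids:
  assumes "dual_3net G1 G2 G3 n" "n \<ge> 2" "l \<in> PG2_lines" "G1 \<subseteq> l"
  shows "l \<inter> G2 = {}" "l \<inter> G3 = {}"
proof -
  have "l \<inter> G1 \<noteq> {}" using assms(2,4) dual_3netD(2)[OF assms(1)] by (auto simp: Int_absorb1)
  then have "card (l \<inter> G1) = 1" if "l \<inter> G2 \<noteq> {} \<or> l \<inter> G3 \<noteq> {}"
    using that dual_3netD(4)[OF assms(1) assms(3)]
      dual_3netD(4)[OF dual_3net_rotate[OF dual_3net_rotate[OF assms(1)]] assms(3)] by blast
  moreover have "card (l \<inter> G1) = n" using assms(4) dual_3netD(2)[OF assms(1)] by (simp add: Int_absorb1)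
  ultimately show "l \<inter> G2 = {}" "l \<inter> G3 = {}" using assms(2) by force+
qed

lemma side_coordinates_product_relation:
  fixes G1 G2 G3 :: "'a::field vec3 set set"
  assumes net: "dual_3net G1 G2 G3 n" and D: "dot3 w1 (cross3 w2 w3) \<noteq> 0"
    and G1: "G1 = (\<lambda>t. ppoint (lincomb3 1 (cross3 w1 w2) t (cross3 w3 w1))) ` T"
    and G2: "G2 = (\<lambda>s. ppoint (lincomb3 1 (cross3 w2 w3) s (cross3 w1 w2))) ` S"
    and G3: "G3 = (\<lambda>r. ppoint (lincomb3 1 (cross3 w3 w1) r (cross3 w2 w3))) ` R"
  shows "\<forall>t\<in>T. \<forall>s\<in>S. \<exists>r\<in>R. t * s * r = -1"
proof (intro ballI)
  fix t s assume "t \<in> T" "s \<in> S"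
  define u where "u = lincomb3 1 (cross3 w1 w2) t (cross3 w3 w1)"
  define v where "v = lincomb3 1 (cross3 w2 w3) s (cross3 w1 w2)"
  have D': "dot3 w2 (cross3 w3 w1) \<noteq> 0" "dot3 w3 (cross3 w1 w2) \<noteq> 0"
    using D by (metis det3_rotate)+
  have "u \<noteq> zero3" "v \<noteq> zero3"
    unfolding u_def v_def using independent2_nonzero(3) independent2_side_vertices D D'(1) by blast+
  have "ppoint u \<in> G1" "ppoint v \<in> G2" using \<open>t \<in> T\<close> \<open>s \<in> S\<close> G1 G2 by (auto simp: u_def v_def)
  then have "cross3 u v \<noteq> zero3"
    using ppoint_eq_if_cross3_eq_zero3[OF \<open>u \<noteq> zero3\<close> \<open>v \<noteq> zero3\<close>] dual_3netD(3)[OF net] by auto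
  then have line: "pline (cross3 u v) \<in> PG2_lines" unfolding PG2_lines_def by blast
  moreover have "ppoint u \<in> pline (cross3 u v)" "ppoint v \<in> pline (cross3 u v)"
    using \<open>u \<noteq> zero3\<close> \<open>v \<noteq> zero3\<close> by (simp_all add: ppoint_in_pline_iff dot3_cross3_self dot3_commute)
  ultimately have "pline (cross3 u v) \<inter> G1 \<noteq> {}" "pline (cross3 u v) \<inter> G2 \<noteq> {}"
    using \<open>ppoint u \<in> G1\<close> \<open>ppoint v \<in> G2\<close> by blast+
  then have "card (pline (cross3 u v) \<inter> G3) = 1"
    using dual_3netD(4)[OF net line] by simp
  then obtain x where "pline (cross3 u v) \<inter> G3 = {x}" by (rule card_1_singletonE)
  then have "x \<in> G3" "x \<in> pline (cross3 u v)" by auto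
  then obtain r where "r \<in> R" and r: "ppoint (lincomb3 1 (cross3 w3 w1) r (cross3 w2 w3)) \<in> pline (cross3 u v)"
    unfolding G3 by blast
  have "lincomb3 1 (cross3 w3 w1) r (cross3 w2 w3) \<noteq> zero3"
    using independent2_nonzero(3)[OF independent2_side_vertices[OF D'(2)]] .
  then have "dot3 (cross3 u v) (lincomb3 1 (cross3 w3 w1) r (cross3 w2 w3)) = 0"
    using r by (simp add: ppoint_in_pline_iff)
  then have "(1 + t * s * r) * (dot3 w1 (cross3 w2 w3))\<^sup>2 = 0"
    by (simp add: u_def v_def det3_side_points)
  then have "t * s * r = -1" using D by (simp add: add_eq_0_iff)
  then show "\<exists>r\<in>R. t * s * r = -1" using \<open>r \<in> R\<close> by blast
qed

lemma triangular_dual_3net_coordinates: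
  fixes G1 G2 G3 :: "'a::field vec3 set set"
  assumes net: "dual_3net G1 G2 G3 n" and "n \<ge> 2" and tri: "triangle_of G1 G2 G3 l1 l2 l3"
  obtains a b T c where "line_basis l1 a b" "vertex l1 l2 = ppoint a" "vertex l1 l3 = ppoint b"
    "G1 = (\<lambda>t. ppoint (lincomb3 1 a t b)) ` T" "card T = n" "c \<noteq> 0" "\<forall>t\<in>T. t ^ n = c"
proof -
  have sides: "triangle l1 l2 l3" "G1 \<subseteq> l1" "G2 \<subseteq> l2" "G3 \<subseteq> l3"
    using tri by (auto simp: triangle_of_def)
  from sides(1) obtain w1 w2 w3 where w: "l1 = pline w1" "l2 = pline w2" "l3 = pline w3"
    and D: "dot3 w1 (cross3 w2 w3) \<noteq> 0"
    and vertices: "vertex l1 l2 = ppoint (cross3 w1 w2)" "vertex l1 l3 = ppoint (cross3 w3 w1)"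
    by (rule triangle_coordinates)
  have D': "dot3 w2 (cross3 w3 w1) \<noteq> 0" "dot3 w3 (cross3 w1 w2) \<noteq> 0"
    using D by (metis det3_rotate)+
  have lines: "l1 \<in> PG2_lines" "l2 \<in> PG2_lines" "l3 \<in> PG2_lines"
    using sides(1) by (auto simp: triangle_def)
  have net': "dual_3net G2 G3 G1 n" "dual_3net G3 G1 G2 n"
    using net dual_3net_rotate by blast+
  note avoid = dual_3net_side_avoids[OF net \<open>n \<ge> 2\<close> lines(1) sides(2)]
    dual_3net_side_avoids[OF net'(1) \<open>n \<ge> 2\<close> lines(2) sides(3)]
    dual_3net_side_avoids[OF net'(2) \<open>n \<ge> 2\<close> lines(3) sides(4)]
  obtain T where T: "G1 = (\<lambda>t. ppoint (lincomb3 1 (cross3 w1 w2) t (cross3 w3 w1))) ` T"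
    "card T = card G1" "0 \<notin> T"
    by (rule side_component_coordinates[OF D]) (use sides avoid w in \<open>auto simp: Int_commute\<close>)
  obtain S where S: "G2 = (\<lambda>s. ppoint (lincomb3 1 (cross3 w2 w3) s (cross3 w1 w2))) ` S"
    "card S = card G2" "0 \<notin> S"
    by (rule side_component_coordinates[OF D'(1)]) (use sides avoid w in \<open>auto simp: Int_commute\<close>)
  obtain R where R: "G3 = (\<lambda>r. ppoint (lincomb3 1 (cross3 w3 w1) r (cross3 w2 w3))) ` R"
    "card R = card G3"
    by (rule side_component_coordinates[OF D'(2)]) (use sides avoid w in \<open>auto simp: Int_commute\<close>)
  have cards: "card T = n" "card S = n" "card R = n"
    using T(2) S(2) R(2) dual_3netD(2) net net' by simp_all
  then have "finite T" "finite S" "finite R" using \<open>n \<ge> 2\<close> by (auto intro: card_ge_0_finite)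
  then obtain c where "c \<noteq> 0" "\<forall>t\<in>T. t ^ n = c"
    using pow_const_if_product_relation[OF _ _ _ cards _ T(3) S(3)] \<open>n \<ge> 2\<close>
      side_coordinates_product_relation[OF net D T(1) S(1) R(1)] by auto
  then show thesis
    using that line_basis_side_vertices[OF D] w(1) vertices T(1) cards(1) by blast
qed

lemma pow_eq_if_coordinate_change:
  assumes indep: "independent2 a b"
    and a': "a' = lincomb3 \<alpha> a \<beta> b" and b': "b' = lincomb3 \<gamma> a \<delta> b"
    and same: "ppoint (lincomb3 1 a' u b') \<in> (\<lambda>t. ppoint (lincomb3 1 a t b)) ` T"
    and pow: "\<forall>t\<in>T. t ^ n = c"
  shows "(\<beta> + u * \<delta>) ^ n = c * (\<alpha> + u * \<gamma>) ^ n"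
proof -
  obtain t where "t \<in> T" and pt: "ppoint (lincomb3 1 a' u b') = ppoint (lincomb3 1 a t b)"
    using same by blast
  obtain k where "k \<noteq> 0" "lincomb3 1 a' u b' = smult3 k (lincomb3 1 a t b)" by (rule ppoint_eqD[OF pt])
  then have "lincomb3 (\<alpha> + u * \<gamma>) a (\<beta> + u * \<delta>) b = lincomb3 k a (k * t) b"
    by (simp add: a' b' lincomb3_lincomb3 smult3_lincomb3)
  then have "\<alpha> + u * \<gamma> = k" "\<beta> + u * \<delta> = k * t"
    using independent2_lincomb3_eq_iff[OF indep] by simp_all
  then show ?thesis using pow \<open>t \<in> T\<close> by (simp add: power_mult_distrib)
qed

lemma vertices_eq_if_common_component:
  fixes a b a' b' :: "'a::field vec3"
  assumes char: "\<And>m. 1 \<le> m \<Longrightarrow> m \<le> n \<Longrightarrow> of_nat m \<noteq> (0::'a)" and "n \<ge> 3"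
    and basis: "line_basis l a b" and basis': "line_basis l a' b'"
    and G: "G = (\<lambda>t. ppoint (lincomb3 1 a t b)) ` T" "c \<noteq> 0" "\<forall>t\<in>T. t ^ n = c"
    and G': "G = (\<lambda>u. ppoint (lincomb3 1 a' u b')) ` T'" "card T' = n" "\<forall>u\<in>T'. u ^ n = c'"
  shows "{ppoint a, ppoint b} = {ppoint a', ppoint b'}"
proof -
  have indep: "independent2 a b" and indep': "independent2 a' b'"
    using basis basis' by (simp_all add: line_basis_def)
  obtain \<alpha> \<beta> \<gamma> \<delta> where a': "a' = lincomb3 \<alpha> a \<beta> b" and b': "b' = lincomb3 \<gamma> a \<delta> b"
    using basis basis' independent2_nonzero(1,2)[OF indep'] unfolding line_basis_def by meson
  have det: "\<alpha> * \<delta> - \<beta> * \<gamma> \<noteq> 0" using indep' a' b' independent2_lincomb3_det by blast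
  have "\<forall>u\<in>T'. (\<beta> + u * \<delta>) ^ n = c * (\<alpha> + u * \<gamma>) ^ n"
  proof
    fix u assume "u \<in> T'"
    then have "ppoint (lincomb3 1 a' u b') \<in> (\<lambda>t. ppoint (lincomb3 1 a t b)) ` T"
      using G(1) G'(1) by blast
    then show "(\<beta> + u * \<delta>) ^ n = c * (\<alpha> + u * \<gamma>) ^ n"
      by (rule pow_eq_if_coordinate_change[OF indep a' b' _ G(3)])
  qed
  moreover have "finite T'" using G'(2) \<open>n \<ge> 3\<close> by (auto intro: card_ge_0_finite)
  ultimately have "(\<beta> = 0 \<and> \<gamma> = 0) \<or> (\<alpha> = 0 \<and> \<delta> = 0)"
    using linear_forms_cases_if_pow_proportional_on_roots[OF _ G'(2) \<open>n \<ge> 3\<close> char G'(3) _ G(2) det]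
    by blast
  then show ?thesis
  proof
    assume "\<beta> = 0 \<and> \<gamma> = 0"
    moreover have "\<alpha> \<noteq> 0" "\<delta> \<noteq> 0" using det calculation by auto
    ultimately have "ppoint a' = ppoint a" "ppoint b' = ppoint b"
      by (simp_all add: a' b' lincomb3_right_0 lincomb3_left_0 ppoint_smult3)
    then show ?thesis by simp
  next
    assume "\<alpha> = 0 \<and> \<delta> = 0"
    moreover have "\<beta> \<noteq> 0" "\<gamma> \<noteq> 0" using det calculation by auto
    ultimately have "ppoint a' = ppoint b" "ppoint b' = ppoint a"
      by (simp_all add: a' b' lincomb3_right_0 lincomb3_left_0 ppoint_smult3)
    then show ?thesis by auto
  qed
qed

theorem proposition4p8:
  fixes G1 G2 G3 S1 S2 S3 :: "'a::alg_closed_field vec3 set set"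
    and l1 l2 l3 m1 m2 m3 :: "'a vec3 set set"
    and n :: nat
  assumes "CHAR('a) = 0 \<or> CHAR('a) > n"
    and "triangular_dual_3net G1 G2 G3 n"
    and "triangular_dual_3net S1 S2 S3 n"
    and "G1 = S1"
    and "triangle_of G1 G2 G3 l1 l2 l3"
    and "triangle_of S1 S2 S3 m1 m2 m3"
  shows "l1 = m1 \<and> {vertex l1 l2, vertex l1 l3} = {vertex m1 m2, vertex m1 m3}"
proof -
  have net: "dual_3net G1 G2 G3 n" "dual_3net S1 S2 S3 n" and "n \<ge> 4"
    using assms(2,3) by (auto simp: triangular_dual_3net_def)
  then have "n \<ge> 2" by simp
  obtain a b T c where basis: "line_basis l1 a b"
    and vertices: "vertex l1 l2 = ppoint a" "vertex l1 l3 = ppoint b"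
    and G1: "G1 = (\<lambda>t. ppoint (lincomb3 1 a t b)) ` T" "card T = n" "c \<noteq> 0" "\<forall>t\<in>T. t ^ n = c"
    using triangular_dual_3net_coordinates[OF net(1) \<open>n \<ge> 2\<close> assms(5)] by blast
  obtain a' b' T' c' where basis': "line_basis m1 a' b'"
    and vertices': "vertex m1 m2 = ppoint a'" "vertex m1 m3 = ppoint b'"
    and S1: "S1 = (\<lambda>t. ppoint (lincomb3 1 a' t b')) ` T'" "card T' = n" "c' \<noteq> 0" "\<forall>t\<in>T'. t ^ n = c'"
    using triangular_dual_3net_coordinates[OF net(2) \<open>n \<ge> 2\<close> assms(6)] by blast
  have "l1 = m1"
    using PG2_lines_eq_if_common_subset[of l1 m1 G1] dual_3netD(1,2)[OF net(1)] \<open>n \<ge> 2\<close> assms(4-6)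
    by (auto simp: triangle_of_def triangle_def)
  moreover have "{ppoint a, ppoint b} = {ppoint a', ppoint b'}"
    using \<open>n \<ge> 4\<close> basis' \<open>l1 = m1\<close>
    by (intro vertices_eq_if_common_component[OF of_nat_neq_0_if_CHAR[OF assms(1)] _ basis _
          G1(1,3,4) S1(1)[folded assms(4)] S1(2,4)]) auto
  ultimately show ?thesis using vertices vertices' by simp
qed

end
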